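(* Let $k\in\mathbb{N}$, $\nu\ge0$, $\alpha>-1$, and let $(Q_n)_{n\in\mathbb{N}_0}$ be a sequence of real polynomials. The orthogonality $$\int_0^\infty Q_n(x)Q_m(x)\rho_{\nu,k}(x)x^\alpha\,dx=\delta_{m,n},\qquad m,n\in\mathbb{N}_0,$$ is equivalent to the composition orthogonality with respect to the weight $\rho_{\nu,k-1}$: $$\int_0^\infty\rho_{\nu,k-1}(t)\,Q_n(\theta)Q_m(\theta)\{t^\alpha\}\,dt=\frac{\delta_{m,n}}{\Gamma(1+\alpha)},\qquad m,n\in\mathbb{N}_0.$$ In particular, for $k=2$ the sequence is compositionally orthogonal with respect to the weight $\rho_{\nu,1}(t)=2t^{\nu/2}K_\nu(2\sqrt t)$ (in the sense of Prudnikov).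
   Context: For $x>0$, $\nu\ge0$, $k\in\mathbb{N}_0$, the ultra-exponential weight function is $$\rho_{\nu,k}(x)=\frac{1}{2\pi i}\int_{\gamma-i\infty}^{\gamma+i\infty}\Gamma(\nu+s)[\Gamma(s)]^kx^{-s}\,ds,\qquad\gamma>0;$$ thus $\rho_{\nu,0}(x)=x^\nu e^{-x}$ and $\rho_{\nu,1}(x)=2x^{\nu/2}K_\nu(2\sqrt x)$, with $K_\nu$ the modified Bessel function of the second kind. The operator $\theta=tDt$ acts by $(\theta f)(t)=t\frac{d}{dt}(tf(t))$; for a polynomial $Q(x)=\sum_jq_jx^j$, $Q(\theta)=\sum_jq_j\theta^j$, and $Q_n(\theta)Q_m(\theta)$ is the composition of operators; note $\theta^j\{t^\alpha\}=(1+\alpha)_jt^{\alpha+j}$. *)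

theory Defs
  imports "HOL-Analysis.Analysis" "HOL-Computational_Algebra.Polynomial"
begin

text \<open>Ultra-exponential weight rho_{nu,k}(x), defined as the inverse Mellin transform
  (1/(2 pi i)) int_{gamma - i inf}^{gamma + i inf} Gamma(nu+s) Gamma(s)^k x^(-s) ds
  on the vertical line gamma = 1 (the value is independent of gamma > 0).
  Parametrising s = 1 + i y gives ds = i dy, so the integral equals
  (1/(2 pi)) int_R Gamma(nu+1+iy) Gamma(1+iy)^k x^(-1-iy) dy, which is real.\<close>
definition rho_uexp :: "real \<Rightarrow> nat \<Rightarrow> real \<Rightarrow> real" where
  "rho_uexp \<nu> k x =
     Re (integral UNIV (\<lambda>y::real.
           Gamma (complex_of_real \<nu> + (1 + \<i> * complex_of_real y))
         * Gamma (1 + \<i> * complex_of_real y) ^ k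
         * complex_of_real x powr (- (1 + \<i> * complex_of_real y)))) / (2 * pi)"

definition theta_op :: "(real \<Rightarrow> real) \<Rightarrow> real \<Rightarrow> real" where
  "theta_op f t = t * deriv (\<lambda>s. s * f s) t"

definition poly_theta :: "real poly \<Rightarrow> (real \<Rightarrow> real) \<Rightarrow> real \<Rightarrow> real" where
  "poly_theta Q f = (\<lambda>t. \<Sum>j\<le>degree Q. coeff Q j * (theta_op ^^ j) f t)"

end

(*
  The Mellin transform of rho_{nu,k} on (0, oo) is Gamma(nu + s) Gamma(s)^k for s > 0.
  For k = 0 the Mellin-Barnes integral defining rho_{nu,0}(x) becomes, after x = e^v, the
  Fourier inversion integral of Gamma(nu + 1 + i t) / Gamma(nu + 1), which is the characteristic
  function of ln X for a Gamma(nu + 1)-distributed X; so Levy inversion returns the density of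
  ln X, that is rho_{nu,0}(x) = x^nu e^-x. Writing Gamma(1 + i y) as the integral of t^(i y) e^-t
  and exchanging the integrals gives rho_{nu,k+1}(x) = int_0^oo rho_{nu,k}(x/t) e^-t dt/t, so by
  induction rho_{nu,k} >= 0, and each step multiplies the Mellin transform by Gamma(s).

  On the other side theta t^beta = (beta + 1) t^(beta + 1), hence
  Q_n(theta) Q_m(theta) {t^alpha} = sum_{j,l} q_{n,j} q_{m,l} (alpha + 1)_{j+l} t^(alpha + j + l).
  Integrating term by term and using Gamma(1 + alpha) (alpha + 1)_{j+l} = Gamma(alpha + 1 + j + l),
  the composition integral against rho_{nu,k-1} is 1 / Gamma(1 + alpha) times the ordinary
  integral of Q_n Q_m x^alpha against rho_{nu,k}, so each orthogonality relation is a rescaling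
  of the other.
*)

theory Submission
  imports Defs "HOL-Probability.Levy"
begin

section \<open>Gamma function on vertical lines\<close>

lemma nonpos_Ints_Re_pos: "Re z > 0 \<Longrightarrow> z \<notin> \<int>\<^sub>\<le>\<^sub>0"
  by (auto elim!: nonpos_Ints_cases)

lemma cpowr_of_real_pos: "x > 0 \<Longrightarrow> complex_of_real x powr w = exp (w * complex_of_real (ln x))"
  by (simp add: powr_def Ln_of_real)

lemma norm_Gamma_le_Gamma_Re:
  fixes z :: complex
  assumes "Re z > 0"
  shows "norm (Gamma z) \<le> Gamma (Re z)"
proof -
  have complex: "((\<lambda>t. of_real t powr (z - 1) / of_real (exp t)) has_integral Gamma z) {0..}"
    using Gamma_integral_complex[OF assms] .
  have real: "((\<lambda>t. t powr (Re z - 1) / exp t) has_integral Gamma (Re z)) {0..}"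
    using Gamma_integral_real[of "Re z"] assms by simp
  have "norm (integral {0..} (\<lambda>t. of_real t powr (z - 1) / of_real (exp t)))
          \<le> integral {0..} (\<lambda>t. t powr (Re z - 1) / exp t)"
    using complex real
    by (intro integral_norm_bound_integral) (auto simp: has_integral_integrable norm_divide norm_powr_real_powr)
  then show ?thesis
    using complex real by (simp add: integral_unique)
qed

lemma Gamma_vertical_line_integral:
  assumes "\<nu> > -1"
  shows "(CLINT x|lborel. indicator {0<..} x *\<^sub>R (complex_of_real (x powr \<nu> / exp x) * iexp (t * ln x)))
           = Gamma (complex_of_real \<nu> + (1 + \<i> * complex_of_real t))"
proof -
  define z where "z = complex_of_real \<nu> + (1 + \<i> * complex_of_real t)"
  define f where "f x = complex_of_real (x powr \<nu> / exp x) * iexp (t * ln x)" for x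
  have Re_z: "Re z > 0"
    using assms by (simp add: z_def)
  have powr_eq: "of_real x powr (z - 1) / of_real (exp x) = f x" if "x > 0" for x
    using that
    by (simp add: f_def z_def cpowr_of_real_pos powr_def Ln_of_real exp_of_real[symmetric]
        exp_add[symmetric] algebra_simps)
  have "(\<lambda>x. of_real x powr (z - 1) / of_real (exp x)) absolutely_integrable_on {0<..}"
    using absolutely_integrable_Gamma_integral'[OF Re_z] .
  then have "f absolutely_integrable_on {0<..}"
    using set_integrable_cong[of lebesgue lebesgue "{0<..}" "{0<..}"
        "\<lambda>x. of_real x powr (z - 1) / of_real (exp x)" f]
      powr_eq by simp
  then have "set_integrable lborel {0<..} f"
    unfolding set_integrable_def by (subst (asm) integrable_completion) (measurable, simp add: f_def)
  moreover have "(f has_integral Gamma z) {0<..}"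
    using Gamma_integral_complex'[OF Re_z] by (rule has_integral_spike[of "{}", rotated 2]) (auto simp: powr_eq)
  ultimately show ?thesis
    using set_borel_integral_eq_integral(2)
    by (fastforce simp: integral_unique set_lebesgue_integral_def f_def z_def)
qed

lemma continuous_on_Gamma_vertical_line:
  assumes "Re a > 0"
  shows "continuous_on UNIV (\<lambda>y::real. Gamma (a + \<i> * of_real y))"
proof -
  have "continuous_on {z. Re z > 0} Gamma"
    by (rule continuous_on_Gamma) (auto dest: nonpos_Ints_Re_pos)
  then show ?thesis
    by (rule continuous_on_compose2) (auto intro!: continuous_intros simp: assms)
qed

section \<open>Fourier and Mellin inversion\<close>

definition inverse_fourier :: "(real \<Rightarrow> complex) \<Rightarrow> real \<Rightarrow> complex" where
  "inverse_fourier \<phi> v = (CLINT t|lborel. iexp (- (t * v)) * \<phi> t) / complex_of_real (2 * pi)"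

text \<open>The Lebesgue counterpart of the Henstock-Kurzweil integral in \<^const>\<open>rho_uexp\<close>;
  it is what makes Fubini's theorem available.\<close>

definition inverse_mellin :: "(real \<Rightarrow> complex) \<Rightarrow> real \<Rightarrow> complex" where
  "inverse_mellin G x =
     (CLINT y|lborel. G y * complex_of_real x powr (- (1 + \<i> * complex_of_real y))) / complex_of_real (2 * pi)"

lemma cpowr_vertical_line:
  assumes "x > 0"
  shows "complex_of_real x powr (- (1 + \<i> * complex_of_real y)) = complex_of_real (1 / x) * iexp (- (y * ln x))"
proof -
  have "complex_of_real x powr (- (1 + \<i> * complex_of_real y)) = exp (- complex_of_real (ln x)) * iexp (- (y * ln x))"
    using assms by (simp add: cpowr_of_real_pos exp_add[symmetric] algebra_simps)
  also have "exp (- complex_of_real (ln x)) = complex_of_real (1 / x)"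
    using assms by (simp add: exp_minus exp_of_real inverse_eq_divide)
  finally show ?thesis .
qed

lemma inverse_mellin_eq_inverse_fourier:
  assumes "x > 0"
  shows "inverse_mellin G x = inverse_fourier G (ln x) / complex_of_real x"
proof -
  have "(CLINT y|lborel. G y * complex_of_real x powr (- (1 + \<i> * complex_of_real y)))
      = (CLINT y|lborel. complex_of_real (1 / x) * (iexp (- (y * ln x)) * G y))"
    by (simp only: cpowr_vertical_line[OF assms] mult_ac)
  also have "\<dots> = complex_of_real (1 / x) * (CLINT y|lborel. iexp (- (y * ln x)) * G y)"
    by (rule integral_mult_right_zero)
  finally show ?thesis
    by (simp add: inverse_mellin_def inverse_fourier_def)
qed

lemma integrable_iexp_mult:
  fixes \<phi> :: "real \<Rightarrow> complex"
  assumes "integrable lborel \<phi>"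
  shows "integrable lborel (\<lambda>t. iexp (- (t * v)) * \<phi> t)"
proof (rule Bochner_Integration.integrable_bound[OF assms])
  show "(\<lambda>t. iexp (- (t * v)) * \<phi> t) \<in> borel_measurable lborel"
    using borel_measurable_integrable[OF assms] by measurable
qed (simp add: norm_mult)

lemma continuous_on_inverse_fourier:
  assumes "integrable lborel \<phi>"
  shows "continuous_on UNIV (inverse_fourier \<phi>)"
proof -
  note [measurable] = borel_measurable_integrable[OF assms]
  have "continuous_on UNIV (\<lambda>v. CLINT t|lborel. iexp (- (t * v)) * \<phi> t)"
  proof (rule continuous_on_sequentiallyI)
    fix u :: "nat \<Rightarrow> real" and v assume "u \<longlonglongrightarrow> v"
    show "(\<lambda>n. CLINT t|lborel. iexp (- (t * u n)) * \<phi> t) \<longlonglongrightarrow> (CLINT t|lborel. iexp (- (t * v)) * \<phi> t)"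
    proof (rule integral_dominated_convergence[where w = "\<lambda>t. norm (\<phi> t)"])
      show "AE t in lborel. (\<lambda>n. iexp (- (t * u n)) * \<phi> t) \<longlonglongrightarrow> iexp (- (t * v)) * \<phi> t"
        using \<open>u \<longlonglongrightarrow> v\<close> by (intro AE_I2 tendsto_intros)
    qed (use assms in \<open>auto simp: norm_mult\<close>)
  qed
  then show ?thesis
    unfolding inverse_fourier_def by (intro continuous_intros) auto
qed

lemma continuous_on_inverse_mellin:
  assumes "integrable lborel G"
  shows "continuous_on {0<..} (inverse_mellin G)"
proof -
  have "continuous_on {0<..} (\<lambda>x. inverse_fourier G (ln x) / complex_of_real x)"
    using continuous_on_compose2[OF continuous_on_inverse_fourier[OF assms] continuous_on_ln[OF continuous_on_id]]
    by (intro continuous_intros) auto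
  then show ?thesis
    by (rule continuous_on_cong[THEN iffD1, rotated 2]) (auto simp: inverse_mellin_eq_inverse_fourier)
qed

lemma norm_Levy_kernel_le:
  assumes "a \<le> b"
  shows "norm ((iexp (- (t * a)) - iexp (- (t * b))) / (\<i> * complex_of_real t)) \<le> b - a"
proof (cases "t = 0")
  case False
  have "(iexp (- (t * a)) - iexp (- (t * b))) / (\<i> * complex_of_real t)
      = (iexp ((- t) * b) - iexp ((- t) * a)) / (\<i> * complex_of_real (- t))"
    by (simp add: divide_minus_right diff_divide_distrib)
  then show ?thesis
    using Levy_Inversion_aux2[OF assms, of "- t"] False by simp
qed (use assms in simp)

lemma integrable_Levy_kernel_mult:
  fixes \<phi> :: "real \<Rightarrow> complex"
  assumes "integrable lborel \<phi>" "a \<le> b"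
  shows "integrable lborel (\<lambda>t. (iexp (- (t * a)) - iexp (- (t * b))) / (\<i> * complex_of_real t) * \<phi> t)"
proof (rule Bochner_Integration.integrable_bound)
  show "integrable lborel (\<lambda>t. (b - a) * norm (\<phi> t))"
    using assms(1) by simp
  have "norm ((iexp (- (t * a)) - iexp (- (t * b))) / (\<i> * complex_of_real t) * \<phi> t) \<le> (b - a) * norm (\<phi> t)" for t
    unfolding norm_mult[of _ "\<phi> t"] by (intro mult_right_mono norm_Levy_kernel_le assms(2)) simp
  then show "AE t in lborel. norm ((iexp (- (t * a)) - iexp (- (t * b))) / (\<i> * complex_of_real t) * \<phi> t)
                               \<le> norm ((b - a) * norm (\<phi> t))"
    using assms(2) by (intro AE_I2) simp
qed (use borel_measurable_integrable[OF assms(1)] in measurable)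

lemma integral_indicator_Icc_iexp:
  assumes "a \<le> b" "t \<noteq> 0"
  shows "(CLINT v|lborel. indicator {a..b} v *\<^sub>R iexp (- (t * v)))
           = (iexp (- (t * a)) - iexp (- (t * b))) / (\<i> * complex_of_real t)"
proof -
  define c where "c = \<i> * complex_of_real t"
  have c: "c \<noteq> 0"
    using assms by (simp add: c_def)
  have "((\<lambda>z. exp (- (c * z)) / (- c)) has_field_derivative exp (- (c * z))) (at z)" for z
    using c by (auto intro!: derivative_eq_intros)
  then have "((\<lambda>v. exp (- (c * complex_of_real v))) has_integral
               exp (- (c * of_real b)) / (- c) - exp (- (c * of_real a)) / (- c)) {a..b}"
    by (intro fundamental_theorem_of_calculus[OF assms(1)] has_vector_derivative_real_field)
  then have "((\<lambda>v. iexp (- (t * v))) has_integral (iexp (- (t * a)) - iexp (- (t * b))) / c) {a..b}"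
    using c by (simp add: c_def field_simps)
  moreover have "set_integrable lborel {a..b} (\<lambda>v. iexp (- (t * v)))"
    by (intro borel_integrable_atLeastAtMost' continuous_intros)
  ultimately show ?thesis
    using set_borel_integral_eq_integral(2) by (fastforce simp: c_def integral_unique set_lebesgue_integral_def)
qed

text \<open>The bounds are written as in \<open>Levy_Inversion\<close>, where \<open>-T\<close> for \<open>T :: nat\<close>
  is coerced through \<^typ>\<open>int\<close>.\<close>

lemma tendsto_interval_integral_symmetric:
  fixes f :: "real \<Rightarrow> 'a::{banach, second_countable_topology}"
  assumes "integrable lborel f"
  shows "(\<lambda>T::nat. interval_lebesgue_integral lborel (ereal (real_of_int (- int T))) (ereal (real T)) f)
           \<longlonglongrightarrow> integral\<^sup>L lborel f"
proof -
  note [measurable] = borel_measurable_integrable[OF assms]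
  have "(\<lambda>T::nat. LINT t|lborel. indicator {- real T<..<real T} t *\<^sub>R f t) \<longlonglongrightarrow> integral\<^sup>L lborel f"
  proof (rule integral_dominated_convergence[where w = "\<lambda>t. norm (f t)"])
    show "AE t in lborel. (\<lambda>T. indicator {- real T<..<real T} t *\<^sub>R f t) \<longlonglongrightarrow> f t"
    proof (rule AE_I2)
      fix t :: real
      obtain N :: nat where "\<bar>t\<bar> < real N"
        using reals_Archimedean2 by blast
      then have "\<forall>\<^sub>F T in sequentially. indicator {- real T<..<real T} t *\<^sub>R f t = f t"
        unfolding eventually_sequentially by (intro exI[of _ N]) (auto simp: indicator_def)
      then show "(\<lambda>T. indicator {- real T<..<real T} t *\<^sub>R f t) \<longlonglongrightarrow> f t"
        by (rule tendsto_eventually)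
    qed
  qed (use assms in \<open>auto simp: indicator_def\<close>)
  then show ?thesis
    by (simp add: interval_lebesgue_integral_def set_lebesgue_integral_def)
qed

lemma integral_Levy_kernel_eq_integral_inverse_fourier:
  assumes "integrable lborel \<phi>" "a \<le> b"
  shows "(CLINT t|lborel. (iexp (- (t * a)) - iexp (- (t * b))) / (\<i> * complex_of_real t) * \<phi> t)
           = complex_of_real (2 * pi) * (CLINT v|lborel. indicator {a..b} v *\<^sub>R inverse_fourier \<phi> v)"
proof -
  note [measurable] = borel_measurable_integrable[OF assms(1)]
  define K where "K v t = indicator {a..b} v *\<^sub>R (iexp (- (t * v)) * \<phi> t)" for v t
  have norm_K: "norm (K v t) = indicator {a..b} v * norm (\<phi> t)" for v t
    by (simp add: K_def norm_mult indicator_def)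
  have "integrable (lborel \<Otimes>\<^sub>M lborel) (case_prod K)"
  proof (rule lborel_pair.Fubini_integrable)
    show "case_prod K \<in> borel_measurable (lborel \<Otimes>\<^sub>M lborel)"
      unfolding K_def by measurable
    show "integrable lborel (\<lambda>v. LINT t|lborel. norm (case_prod K (v, t)))"
      using assms by (simp add: norm_K integrable_real_indicator emeasure_lborel_Icc)
    show "AE v in lborel. integrable lborel (\<lambda>t. case_prod K (v, t))"
      using integrable_iexp_mult[OF assms(1)] by (simp add: K_def)
  qed
  then have "(CLINT t|lborel. CLINT v|lborel. K v t) = (CLINT v|lborel. CLINT t|lborel. K v t)"
    by (rule lborel_pair.Fubini_integral)
  moreover have "(CLINT t|lborel. CLINT v|lborel. K v t)
      = (CLINT t|lborel. (iexp (- (t * a)) - iexp (- (t * b))) / (\<i> * complex_of_real t) * \<phi> t)"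
  proof (rule integral_discrete_difference[where X = "{0}"])
    fix t :: real assume "t \<notin> {0}"
    have "(CLINT v|lborel. K v t) = (CLINT v|lborel. indicator {a..b} v *\<^sub>R iexp (- (t * v))) * \<phi> t"
      by (simp add: K_def scaleR_conv_of_real mult.assoc flip: integral_mult_left_zero)
    with \<open>t \<notin> {0}\<close>
    show "(CLINT v|lborel. K v t) = (iexp (- (t * a)) - iexp (- (t * b))) / (\<i> * complex_of_real t) * \<phi> t"
      using integral_indicator_Icc_iexp[OF assms(2), of t] by simp
  qed auto
  moreover have "(CLINT v|lborel. indicator {a..b} v *\<^sub>R inverse_fourier \<phi> v)
      = (CLINT v|lborel. (CLINT t|lborel. K v t) / complex_of_real (2 * pi))"
    by (simp add: K_def inverse_fourier_def scaleR_conv_of_real flip: integral_mult_right_zero)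
  ultimately show ?thesis
    by (simp add: integral_divide_zero)
qed

lemma (in real_distribution) Levy_Inversion_integrable_char:
  assumes "integrable lborel (char M)" "a \<le> b" "prob {a} = 0" "prob {b} = 0"
  shows "prob {a<..b} = integral {a..b} (\<lambda>v. Re (inverse_fourier (char M) v))"
proof -
  define K where "K t = (iexp (- (t * a)) - iexp (- (t * b))) / (\<i> * complex_of_real t) * char M t" for t
  have "integrable lborel K"
    unfolding K_def using assms(1,2) by (rule integrable_Levy_kernel_mult)
  then have "(\<lambda>T. complex_of_real (1 / (2 * pi)) *
        interval_lebesgue_integral lborel (ereal (real_of_int (- int T))) (ereal (real T)) K)
      \<longlonglongrightarrow> complex_of_real (1 / (2 * pi)) * (CLINT t|lborel. K t)"
    by (intro tendsto_mult_left tendsto_interval_integral_symmetric)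
  with Levy_Inversion[OF assms(2-4)]
  have "complex_of_real (prob {a<..b}) = complex_of_real (1 / (2 * pi)) * (CLINT t|lborel. K t)"
    unfolding K_def by (rule LIMSEQ_unique)
  also have "\<dots> = (CLINT v|lborel. indicator {a..b} v *\<^sub>R inverse_fourier (char M) v)"
    unfolding K_def integral_Levy_kernel_eq_integral_inverse_fourier[OF assms(1,2)] by simp
  finally have "prob {a<..b} = Re (CLINT v|lborel. indicator {a..b} v *\<^sub>R inverse_fourier (char M) v)"
    by (metis Re_complex_of_real)
  also have "\<dots> = (LINT v|lborel. indicator {a..b} v * Re (inverse_fourier (char M) v))"
  proof -
    have "set_integrable lborel {a..b} (inverse_fourier (char M))"
      using continuous_on_inverse_fourier[OF assms(1)]
      by (intro borel_integrable_atLeastAtMost') (auto intro: continuous_on_subset)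
    then show ?thesis
      unfolding set_integrable_def by (subst integral_Re[symmetric]) auto
  qed
  also have "\<dots> = integral {a..b} (\<lambda>v. Re (inverse_fourier (char M) v))"
  proof -
    have "continuous_on {a..b} (\<lambda>v. Re (inverse_fourier (char M) v))"
      by (intro continuous_intros continuous_on_subset[OF continuous_on_inverse_fourier[OF assms(1)]]) auto
    then have "set_integrable lborel {a..b} (\<lambda>v. Re (inverse_fourier (char M) v))"
      by (rule borel_integrable_atLeastAtMost')
    from set_borel_integral_eq_integral(2)[OF this] show ?thesis
      by (simp add: set_lebesgue_integral_def)
  qed
  finally show ?thesis .
qed

lemma continuous_eq_derivative_of_integral:
  fixes f G :: "real \<Rightarrow> real"
  assumes f: "continuous_on UNIV f" and G: "\<And>b. a < b \<Longrightarrow> integral {a..b} f = G b"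
    and x: "a < x" and "(G has_real_derivative g) (at x)"
  shows "f x = g"
proof -
  have "((\<lambda>b. integral {a..b} f) has_real_derivative f x) (at x within {a..x + 1})"
    using x by (intro integral_has_real_derivative continuous_on_subset[OF f]) auto
  then have "((\<lambda>b. integral {a..b} f) has_real_derivative f x) (at x)"
    using x by (simp add: at_within_Icc_at)
  then have "(G has_real_derivative f x) (at x)"
    by (rule has_field_derivative_transform_within_open[of _ _ _ "{a<..}"]) (use x G in auto)
  then show ?thesis
    using assms(4) by (rule DERIV_unique)
qed

section \<open>Mellin convolution with the exponential\<close>

lemma integrable_lborel_pair_product_bound:
  fixes F :: "real \<times> real \<Rightarrow> 'a::{banach, second_countable_topology}" and f g :: "real \<Rightarrow> real"
  assumes f: "integrable lborel f" and g: "integrable lborel g"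
    and F: "F \<in> borel_measurable (lborel \<Otimes>\<^sub>M lborel)" and bound: "\<And>x y. norm (F (x, y)) \<le> f x * g y"
  shows "integrable (lborel \<Otimes>\<^sub>M lborel) F"
proof (rule Bochner_Integration.integrable_bound[OF _ F])
  note [measurable] = borel_measurable_integrable[OF f] borel_measurable_integrable[OF g]
  show "integrable (lborel \<Otimes>\<^sub>M lborel) (\<lambda>(x, y). f x * g y)"
  proof (rule lborel_pair.Fubini_integrable)
    show "integrable lborel (\<lambda>x. LINT y|lborel. norm (case_prod (\<lambda>x y. f x * g y) (x, y)))"
      using f by (simp add: abs_mult)
    show "AE x in lborel. integrable lborel (\<lambda>y. case_prod (\<lambda>x y. f x * g y) (x, y))"
      using g by simp
  qed simp
  show "AE z in lborel \<Otimes>\<^sub>M lborel. norm (F z) \<le> norm (case_prod (\<lambda>x y. f x * g y) z)"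
    using bound by (intro AE_I2) (auto intro: order_trans[OF _ abs_ge_self])
qed

lemma integrable_Gamma_vertical_line_kernel:
  fixes G :: "real \<Rightarrow> complex"
  assumes G: "integrable lborel G"
  shows "integrable (lborel \<Otimes>\<^sub>M lborel)
           (\<lambda>(y, t). G y * iexp (- (y * u))
              * (indicator {0<..} t *\<^sub>R (complex_of_real (exp (- t)) * iexp (y * ln t))))"
proof (rule integrable_lborel_pair_product_bound)
  show "integrable lborel (\<lambda>y. norm (G y))"
    using G by simp
  show "integrable lborel (\<lambda>t::real. indicator {0<..} t * exp (- t))"
    using integrable_I0i_exp_mscale[of 1] by (simp add: set_integrable_def)
  show "(\<lambda>(y, t). G y * iexp (- (y * u))
            * (indicator {0<..} t *\<^sub>R (complex_of_real (exp (- t)) * iexp (y * ln t))))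
          \<in> borel_measurable (lborel \<Otimes>\<^sub>M lborel)"
    using borel_measurable_integrable[OF G] by measurable
qed (simp add: norm_mult norm_exp_i_times[unfolded of_real_mult])

lemma inverse_mellin_mult_Gamma:
  fixes G :: "real \<Rightarrow> complex"
  assumes G: "integrable lborel G" and x: "x > 0"
  defines "h \<equiv> \<lambda>t. indicator {0<..} t *\<^sub>R (inverse_mellin G (x / t) * complex_of_real (exp (- t) / t))"
  shows "integrable lborel h"
    and "inverse_mellin (\<lambda>y. G y * Gamma (1 + \<i> * complex_of_real y)) x = (CLINT t|lborel. h t)"
proof -
  define F where "F y t = G y * iexp (- (y * ln x))
      * (indicator {0<..} t *\<^sub>R (complex_of_real (exp (- t)) * iexp (y * ln t)))" for y t
  have F_integrable: "integrable (lborel \<Otimes>\<^sub>M lborel) (case_prod F)"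
    unfolding F_def using integrable_Gamma_vertical_line_kernel[OF G] .
  have integral_F_t: "(CLINT t|lborel. F y t)
      = complex_of_real x
        * (G y * Gamma (1 + \<i> * complex_of_real y) * complex_of_real x powr (- (1 + \<i> * complex_of_real y)))"
    for y
  proof -
    have "(CLINT t|lborel. F y t) = G y * iexp (- (y * ln x))
        * (CLINT t|lborel. indicator {0<..} t *\<^sub>R (complex_of_real (t powr 0 / exp t) * iexp (y * ln t)))"
      unfolding F_def integral_mult_right_zero[symmetric]
      by (intro Bochner_Integration.integral_cong) (auto simp: indicator_def exp_minus divide_inverse)
    also have "(CLINT t|lborel. indicator {0<..} t *\<^sub>R (complex_of_real (t powr 0 / exp t) * iexp (y * ln t)))
        = Gamma (1 + \<i> * complex_of_real y)"
      using Gamma_vertical_line_integral[of 0 y] by simp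
    finally show ?thesis
      unfolding cpowr_vertical_line[OF x] using x by simp
  qed
  have integral_F_y: "(CLINT y|lborel. F y t) = complex_of_real (2 * pi * x) * h t" for t
  proof (cases "t > 0")
    case True
    with x have "x / t > 0"
      by simp
    have "F y t = G y * complex_of_real (x / t) powr (- (1 + \<i> * complex_of_real y))
        * complex_of_real (x * (exp (- t) / t))"
      for y
      unfolding cpowr_vertical_line[OF \<open>x / t > 0\<close>] using True x
      by (simp add: F_def ln_div exp_diff exp_minus field_simps)
    then have "(CLINT y|lborel. F y t)
        = (CLINT y|lborel. G y * complex_of_real (x / t) powr (- (1 + \<i> * complex_of_real y)))
          * complex_of_real (x * (exp (- t) / t))"
      by (simp flip: integral_mult_left_zero)
    then show ?thesis
      using True by (simp add: h_def inverse_mellin_def)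
  qed (simp add: F_def h_def)
  show "integrable lborel h"
    using integrable_divide_zero[OF lborel_pair.integrable_snd[OF F_integrable], of "complex_of_real (2 * pi * x)"]
      x
    by (simp add: integral_F_y)
  have "inverse_mellin (\<lambda>y. G y * Gamma (1 + \<i> * complex_of_real y)) x
      = (CLINT y|lborel. CLINT t|lborel. F y t) / complex_of_real (2 * pi * x)"
    using x by (simp add: inverse_mellin_def integral_F_t)
  also have "\<dots> = (CLINT t|lborel. CLINT y|lborel. F y t) / complex_of_real (2 * pi * x)"
    by (simp add: lborel_pair.Fubini_integral[OF F_integrable])
  also have "\<dots> = (CLINT t|lborel. h t)"
    using x by (simp add: integral_F_y)
  finally show "inverse_mellin (\<lambda>y. G y * Gamma (1 + \<i> * complex_of_real y)) x = (CLINT t|lborel. h t)" .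
qed

lemma nn_integral_mellin_convolution:
  fixes f g :: "real \<Rightarrow> real"
  assumes [measurable]: "f \<in> borel_measurable borel" "g \<in> borel_measurable borel"
    and f_nonneg: "\<And>x. f x \<ge> 0" and g_nonneg: "\<And>x. g x \<ge> 0"
  shows "(\<integral>\<^sup>+ x. \<integral>\<^sup>+ t. ennreal (indicator {0<..} x * indicator {0<..} t * x powr (s - 1) * f (x / t) * g t / t)
             \<partial>lborel \<partial>lborel)
       = (\<integral>\<^sup>+ u. ennreal (indicator {0<..} u * u powr (s - 1) * f u) \<partial>lborel)
         * (\<integral>\<^sup>+ t. ennreal (indicator {0<..} t * t powr (s - 1) * g t) \<partial>lborel)"
    (is "_ = ?F * _")
proof -
  define H where "H x t = ennreal (indicator {0<..} x * indicator {0<..} t * x powr (s - 1) * f (x / t) * g t / t)"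
    for x t
  have "case_prod H \<in> borel_measurable (lborel \<Otimes>\<^sub>M lborel)"
    unfolding H_def by measurable
  then have "(\<integral>\<^sup>+ x. \<integral>\<^sup>+ t. H x t \<partial>lborel \<partial>lborel) = (\<integral>\<^sup>+ t. \<integral>\<^sup>+ x. H x t \<partial>lborel \<partial>lborel)"
    by (rule lborel_pair.Fubini'[symmetric])
  also have "\<dots> = (\<integral>\<^sup>+ t. ennreal (indicator {0<..} t * t powr (s - 1) * g t) * ?F \<partial>lborel)"
  proof (rule nn_integral_cong)
    fix t :: real
    show "(\<integral>\<^sup>+ x. H x t \<partial>lborel) = ennreal (indicator {0<..} t * t powr (s - 1) * g t) * ?F"
    proof (cases "t > 0")
      case True
      have "(\<integral>\<^sup>+ x. H x t \<partial>lborel) = ennreal \<bar>t\<bar> * (\<integral>\<^sup>+ u. H (0 + t * u) t \<partial>lborel)"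
        using True by (intro nn_integral_real_affine) (simp_all add: H_def)
      also have "(\<integral>\<^sup>+ u. H (0 + t * u) t \<partial>lborel)
          = (\<integral>\<^sup>+ u. ennreal (t powr (s - 1) * g t / t) * ennreal (indicator {0<..} u * u powr (s - 1) * f u)
               \<partial>lborel)"
        using True f_nonneg g_nonneg
        by (intro nn_integral_cong)
           (auto simp: H_def indicator_def zero_less_mult_iff powr_mult ennreal_mult'[symmetric] mult_ac)
      also have "\<dots> = ennreal (t powr (s - 1) * g t / t) * ?F"
        by (rule nn_integral_cmult) measurable
      finally show ?thesis
        using True g_nonneg by (simp add: ennreal_mult'[symmetric] mult.assoc[symmetric])
    qed (simp add: H_def)
  qed
  also have "\<dots> = (\<integral>\<^sup>+ t. ennreal (indicator {0<..} t * t powr (s - 1) * g t) \<partial>lborel) * ?F"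
    by (rule nn_integral_multc) measurable
  finally show ?thesis
    by (simp add: H_def mult.commute)
qed

section \<open>The Mellin--Barnes kernel of the weights\<close>

definition uexp_kernel :: "real \<Rightarrow> nat \<Rightarrow> real \<Rightarrow> complex" where
  "uexp_kernel \<nu> k y =
     Gamma (complex_of_real \<nu> + (1 + \<i> * complex_of_real y)) * Gamma (1 + \<i> * complex_of_real y) ^ k"

lemma uexp_kernel_Suc: "uexp_kernel \<nu> (Suc k) = (\<lambda>y. uexp_kernel \<nu> k y * Gamma (1 + \<i> * complex_of_real y))"
  by (simp add: uexp_kernel_def fun_eq_iff mult_ac)

lemma continuous_on_uexp_kernel:
  assumes "\<nu> > -1"
  shows "continuous_on UNIV (uexp_kernel \<nu> k)"
proof -
  have "continuous_on UNIV (\<lambda>y::real. Gamma ((of_real \<nu> + 1) + \<i> * of_real y))"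
    by (rule continuous_on_Gamma_vertical_line) (use assms in simp)
  moreover have "continuous_on UNIV (\<lambda>y::real. Gamma (1 + \<i> * of_real y))"
    by (rule continuous_on_Gamma_vertical_line) simp
  ultimately show ?thesis
    unfolding uexp_kernel_def by (auto intro!: continuous_intros simp: add_ac)
qed

lemma borel_measurable_uexp_kernel [measurable]:
  "\<nu> > -1 \<Longrightarrow> uexp_kernel \<nu> k \<in> borel_measurable borel"
  using continuous_on_uexp_kernel by (rule borel_measurable_continuous_onI)

lemma norm_uexp_kernel_le:
  assumes "\<nu> \<ge> 0"
  shows "norm (uexp_kernel \<nu> k y) \<le> Gamma (\<nu> + 3) / (1 + y\<^sup>2)"
proof -
  define z where "z = complex_of_real \<nu> + (1 + \<i> * complex_of_real y)"
  have z: "Re z = \<nu> + 1" "Im z = y" "Re z > 0"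
    using assms by (simp_all add: z_def)
  have "Gamma (z + 2) = (z + 1) * (z * Gamma z)"
    using Gamma_plus1[of "z + 1"] Gamma_plus1[of z] nonpos_Ints_Re_pos[of z] nonpos_Ints_Re_pos[of "z + 1"] z
    by (simp add: add.assoc)
  then have "norm (Gamma z) * (norm z * norm (z + 1)) = norm (Gamma (z + 2))"
    by (simp add: norm_mult)
  also have "\<dots> \<le> Gamma (\<nu> + 3)"
    using norm_Gamma_le_Gamma_Re[of "z + 2"] z by (simp add: add.assoc)
  finally have Gamma_z_bound: "norm (Gamma z) * (norm z * norm (z + 1)) \<le> Gamma (\<nu> + 3)" .
  have "norm z \<le> norm (z + 1)"
  proof (rule power2_le_imp_le)
    show "(norm z)\<^sup>2 \<le> (norm (z + 1))\<^sup>2"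
      unfolding cmod_power2 using z by (simp add: power2_eq_square algebra_simps)
  qed simp
  then have "(norm z)\<^sup>2 \<le> norm z * norm (z + 1)"
    by (simp add: power2_eq_square mult_left_mono)
  moreover have "1 + y\<^sup>2 \<le> (norm z)\<^sup>2"
    unfolding cmod_power2 using z assms one_le_power[of "\<nu> + 1" 2] by simp
  ultimately have "norm (Gamma z) * (1 + y\<^sup>2) \<le> norm (Gamma z) * (norm z * norm (z + 1))"
    by (intro mult_left_mono) auto
  with Gamma_z_bound have "norm (Gamma z) \<le> Gamma (\<nu> + 3) / (1 + y\<^sup>2)"
    by (simp add: field_simps add_pos_nonneg)
  moreover have "norm (Gamma (1 + \<i> * complex_of_real y) ^ k) \<le> 1"
    using norm_Gamma_le_Gamma_Re[of "1 + \<i> * complex_of_real y"] by (simp add: norm_power power_le_one)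
  ultimately show ?thesis
    unfolding uexp_kernel_def z_def[symmetric] norm_mult
    by (meson mult_le_one norm_ge_zero order_trans mult_left_le)
qed

lemma integrable_uexp_kernel:
  assumes "\<nu> \<ge> 0"
  shows "integrable lborel (uexp_kernel \<nu> k)"
proof (rule Bochner_Integration.integrable_bound)
  show "integrable lborel (\<lambda>y. Gamma (\<nu> + 3) * inverse (1 + y\<^sup>2))"
    using integrable_inverse_1_plus_square by (simp add: set_integrable_def einterval_eq_UNIV)
  show "AE y in lborel. norm (uexp_kernel \<nu> k y) \<le> norm (Gamma (\<nu> + 3) * inverse (1 + y\<^sup>2))"
    using norm_uexp_kernel_le[OF assms] Gamma_real_pos[of "\<nu> + 3"] assms
    by (auto simp: abs_mult divide_inverse add_pos_nonneg)
qed (use assms in simp)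

lemma rho_uexp_eq_inverse_mellin:
  assumes "\<nu> \<ge> 0" "x > 0"
  shows "rho_uexp \<nu> k x = Re (inverse_mellin (uexp_kernel \<nu> k) x)"
proof -
  have "integrable lborel (\<lambda>y. complex_of_real (1 / x) * (iexp (- (y * ln x)) * uexp_kernel \<nu> k y))"
    using integrable_iexp_mult[OF integrable_uexp_kernel[OF assms(1)]] by simp
  then have "integrable lborel (\<lambda>y. uexp_kernel \<nu> k y * complex_of_real x powr (- (1 + \<i> * complex_of_real y)))"
    by (simp only: cpowr_vertical_line[OF assms(2)] mult_ac)
  then show ?thesis
    by (simp add: rho_uexp_def inverse_mellin_def uexp_kernel_def integral_lborel)
qed

lemma continuous_on_rho_uexp:
  assumes "\<nu> \<ge> 0"
  shows "continuous_on {0<..} (rho_uexp \<nu> k)"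
proof -
  have "continuous_on {0<..} (\<lambda>x. Re (inverse_mellin (uexp_kernel \<nu> k) x))"
    using continuous_on_inverse_mellin[OF integrable_uexp_kernel[OF assms]] by (intro continuous_intros)
  then show ?thesis
    by (rule continuous_on_cong[THEN iffD1, rotated 2]) (auto simp: rho_uexp_eq_inverse_mellin[OF assms])
qed

lemma borel_measurable_rho_uexp [measurable]:
  "\<nu> \<ge> 0 \<Longrightarrow> (\<lambda>x. indicator {0<..} x * rho_uexp \<nu> k x) \<in> borel_measurable borel"
  using borel_measurable_continuous_on_indicator[OF _ continuous_on_rho_uexp] by simp

section \<open>The log-Gamma distribution and the weight for k = 0\<close>

definition gamma_density :: "real \<Rightarrow> real \<Rightarrow> real" where
  "gamma_density \<nu> x = indicator {0<..} x * x powr \<nu> / exp x / Gamma (\<nu> + 1)"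

definition log_gamma_distribution :: "real \<Rightarrow> real measure" where
  "log_gamma_distribution \<nu> = distr (density lborel (\<lambda>x. ennreal (gamma_density \<nu> x))) borel ln"

lemma borel_measurable_gamma_density [measurable]: "gamma_density \<nu> \<in> borel_measurable borel"
  unfolding gamma_density_def by measurable

lemma gamma_density_nonneg: "\<nu> > -1 \<Longrightarrow> gamma_density \<nu> x \<ge> 0"
  using Gamma_real_pos[of "\<nu> + 1"] by (simp add: gamma_density_def)

lemma continuous_on_gamma_density:
  assumes "\<nu> > -1"
  shows "continuous_on {0<..} (gamma_density \<nu>)"
proof -
  have "Gamma (\<nu> + 1) > 0"
    using assms by (intro Gamma_real_pos) simp
  then have "continuous_on {0<..} (\<lambda>x. x powr \<nu> / exp x / Gamma (\<nu> + 1))"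
    by (intro continuous_intros) auto
  then show ?thesis
    by (rule continuous_on_cong[THEN iffD1, rotated 2]) (auto simp: gamma_density_def)
qed

lemma nn_integral_gamma_density:
  assumes "\<nu> > -1"
  shows "(\<integral>\<^sup>+ x. ennreal (gamma_density \<nu> x) \<partial>lborel) = 1"
proof -
  have Gamma_pos: "Gamma (\<nu> + 1) > 0"
    using assms by (intro Gamma_real_pos) simp
  have "((\<lambda>x. x powr (\<nu> + 1 - 1) / exp x / Gamma (\<nu> + 1)) has_integral Gamma (\<nu> + 1) / Gamma (\<nu> + 1)) {0..}"
    using assms by (intro has_integral_divide Gamma_integral_real) simp
  then have "(\<integral>\<^sup>+ x. ennreal (indicator {0..} x * (x powr \<nu> / exp x / Gamma (\<nu> + 1))) \<partial>lborel) = 1"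
    using Gamma_pos by (subst nn_integral_has_integral_lebesgue) auto
  also have "(\<integral>\<^sup>+ x. ennreal (indicator {0..} x * (x powr \<nu> / exp x / Gamma (\<nu> + 1))) \<partial>lborel)
      = (\<integral>\<^sup>+ x. ennreal (gamma_density \<nu> x) \<partial>lborel)"
    by (intro nn_integral_cong) (auto simp: gamma_density_def indicator_def)
  finally show ?thesis .
qed

lemma real_distribution_log_gamma_distribution:
  assumes "\<nu> > -1"
  shows "real_distribution (log_gamma_distribution \<nu>)"
proof -
  have "prob_space (density lborel (\<lambda>x. ennreal (gamma_density \<nu> x)))"
    by (rule prob_spaceI) (simp add: emeasure_density nn_integral_gamma_density[OF assms])
  then interpret prob_space "density lborel (\<lambda>x. ennreal (gamma_density \<nu> x))" .
  show ?thesis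
    unfolding log_gamma_distribution_def by (rule real_distribution_distr) simp
qed

lemma char_log_gamma_distribution:
  assumes "\<nu> > -1"
  shows "char (log_gamma_distribution \<nu>) t = uexp_kernel \<nu> 0 t / complex_of_real (Gamma (\<nu> + 1))"
proof -
  have "char (log_gamma_distribution \<nu>) t = (CLINT x|lborel. gamma_density \<nu> x *\<^sub>R iexp (t * ln x))"
    unfolding char_def log_gamma_distribution_def
    by (simp add: integral_distr integral_density gamma_density_nonneg[OF assms])
  also have "\<dots> = (CLINT x|lborel. indicator {0<..} x *\<^sub>R (complex_of_real (x powr \<nu> / exp x) * iexp (t * ln x))
                    / complex_of_real (Gamma (\<nu> + 1)))"
    by (intro Bochner_Integration.integral_cong) (auto simp: gamma_density_def indicator_def scaleR_conv_of_real)
  also have "\<dots> = (CLINT x|lborel. indicator {0<..} x *\<^sub>R (complex_of_real (x powr \<nu> / exp x) * iexp (t * ln x)))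
                    / complex_of_real (Gamma (\<nu> + 1))"
    by (rule integral_divide_zero)
  finally show ?thesis
    by (simp only: Gamma_vertical_line_integral[OF assms] uexp_kernel_def power_0 mult_1_right)
qed

lemma emeasure_log_gamma_distribution:
  assumes "A \<in> sets borel"
  shows "emeasure (log_gamma_distribution \<nu>) A
           = (\<integral>\<^sup>+ x. ennreal (gamma_density \<nu> x) * indicator (ln -` A) x \<partial>lborel)"
proof -
  have "ln -` A \<in> sets borel"
    using measurable_sets[OF borel_measurable_ln[OF measurable_ident_sets[OF refl]] assms] by simp
  then show ?thesis
    unfolding log_gamma_distribution_def using assms
    by (simp add: emeasure_distr emeasure_density)
qed

lemma measure_log_gamma_distribution_singleton: "measure (log_gamma_distribution \<nu>) {c} = 0"
proof -
  have "AE x in lborel. ennreal (gamma_density \<nu> x) * indicator (ln -` {c}) x = 0"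
    using AE_lborel_singleton[of "exp c"] by eventually_elim (auto simp: gamma_density_def indicator_def)
  then have "emeasure (log_gamma_distribution \<nu>) {c} = (\<integral>\<^sup>+ x. 0 \<partial>(lborel :: real measure))"
    unfolding emeasure_log_gamma_distribution[OF borel_singleton[OF sets.empty_sets]]
    by (rule nn_integral_cong_AE)
  then show ?thesis
    by (simp add: measure_def)
qed

lemma measure_log_gamma_distribution_Ioc:
  assumes "\<nu> > -1" "a \<le> b"
  shows "measure (log_gamma_distribution \<nu>) {a<..b} = integral {exp a..exp b} (gamma_density \<nu>)"
proof -
  have "continuous_on {exp a..exp b} (gamma_density \<nu>)"
    using continuous_on_gamma_density[OF assms(1)]
    by (rule continuous_on_subset) (auto intro: less_le_trans[OF exp_gt_zero])
  then have integral: "(gamma_density \<nu> has_integral integral {exp a..exp b} (gamma_density \<nu>)) {exp a..exp b}"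
    using integrable_continuous_interval integrable_integral by blast
  have "AE x in lborel. ennreal (gamma_density \<nu> x) * indicator (ln -` {a<..b}) x
                       = ennreal (gamma_density \<nu> x) * indicator {exp a..exp b} x"
    using AE_lborel_singleton[of "exp a"]
  proof eventually_elim
    case (elim x)
    show ?case
    proof (cases "x > 0")
      case True
      then have "a < ln x \<longleftrightarrow> exp a < x" "ln x \<le> b \<longleftrightarrow> x \<le> exp b"
        by (metis exp_less_cancel_iff exp_ln, metis exp_le_cancel_iff exp_ln)
      with True elim show ?thesis
        by (auto simp: gamma_density_def indicator_def)
    next
      case False
      then have "\<not> exp a \<le> x"
        using exp_gt_zero[of a] by linarith
      with False show ?thesis
        by (auto simp: gamma_density_def indicator_def)
    qed
  qed
  then have "emeasure (log_gamma_distribution \<nu>) {a<..b}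
      = (\<integral>\<^sup>+ x. ennreal (gamma_density \<nu> x) * indicator {exp a..exp b} x \<partial>lborel)"
    by (simp add: emeasure_log_gamma_distribution nn_integral_cong_AE)
  also have "\<dots> = ennreal (integral {exp a..exp b} (gamma_density \<nu>))"
    using nn_integral_has_integral_lebesgue'[OF gamma_density_nonneg[OF assms(1)] integral] .
  finally have "emeasure (log_gamma_distribution \<nu>) {a<..b}
      = ennreal (integral {exp a..exp b} (gamma_density \<nu>))" .
  moreover have "integral {exp a..exp b} (gamma_density \<nu>) \<ge> 0"
    using integral by (intro has_integral_nonneg[OF integral] gamma_density_nonneg[OF assms(1)])
  ultimately show ?thesis
    by (simp add: measure_def)
qed

lemma Re_inverse_fourier_char_log_gamma_distribution:
  assumes "\<nu> \<ge> 0"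
  shows "Re (inverse_fourier (char (log_gamma_distribution \<nu>)) v) = gamma_density \<nu> (exp v) * exp v"
proof -
  have \<nu>: "\<nu> > -1"
    using assms by simp
  interpret real_distribution "log_gamma_distribution \<nu>"
    by (rule real_distribution_log_gamma_distribution[OF \<nu>])
  have "char (log_gamma_distribution \<nu>) = (\<lambda>t. uexp_kernel \<nu> 0 t / complex_of_real (Gamma (\<nu> + 1)))"
    using char_log_gamma_distribution[OF \<nu>] by blast
  then have integrable_char: "integrable lborel (char (log_gamma_distribution \<nu>))"
    using integrable_uexp_kernel[OF assms, of 0] by simp
  define a where "a = v - 1"
  define F where "F = (\<lambda>v. Re (inverse_fourier (char (log_gamma_distribution \<nu>)) v))"
  define G where "G = (\<lambda>b. integral {exp a..exp b} (gamma_density \<nu>))"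
  have "F v = gamma_density \<nu> (exp v) * exp v"
  proof (rule continuous_eq_derivative_of_integral[of F a G])
    show "continuous_on UNIV F"
      unfolding F_def using continuous_on_inverse_fourier[OF integrable_char] by (intro continuous_intros)
    show "integral {a..b} F = G b" if "a < b" for b
      using Levy_Inversion_integrable_char[OF integrable_char, of a b]
        measure_log_gamma_distribution_Ioc[OF \<nu>, of a b]
        measure_log_gamma_distribution_singleton that by (simp add: F_def G_def)
    show "a < v"
      by (simp add: a_def)
    have "{exp a..exp (v + 1)} \<subseteq> {0<..}"
      by (metis atLeastAtMost_iff exp_gt_zero greaterThan_iff less_le_trans subsetI)
    then have "((\<lambda>u. integral {exp a..u} (gamma_density \<nu>)) has_real_derivative gamma_density \<nu> (exp v))
            (at (exp v) within {exp a..exp (v + 1)})"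
      using continuous_on_subset[OF continuous_on_gamma_density[OF \<nu>]]
      by (intro integral_has_real_derivative) (auto simp: a_def)
    then have "((\<lambda>u. integral {exp a..u} (gamma_density \<nu>)) has_real_derivative gamma_density \<nu> (exp v))
            (at (exp v))"
      by (simp add: a_def at_within_Icc_at)
    from DERIV_chain'[OF DERIV_exp this]
    show "(G has_real_derivative gamma_density \<nu> (exp v) * exp v) (at v)"
      by (simp add: G_def)
  qed
  then show ?thesis
    by (simp add: F_def)
qed

lemma rho_uexp_0:
  assumes "\<nu> \<ge> 0" "x > 0"
  shows "rho_uexp \<nu> 0 x = x powr \<nu> / exp x"
proof -
  have \<nu>: "\<nu> > -1"
    using assms by simp
  have Gamma_pos: "Gamma (\<nu> + 1) > 0"
    using assms by (intro Gamma_real_pos) simp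
  have "uexp_kernel \<nu> 0 = (\<lambda>t. complex_of_real (Gamma (\<nu> + 1)) * char (log_gamma_distribution \<nu>) t)"
    using Gamma_pos by (simp add: char_log_gamma_distribution[OF \<nu>] fun_eq_iff)
  then have "inverse_fourier (uexp_kernel \<nu> 0) v
      = complex_of_real (Gamma (\<nu> + 1)) * inverse_fourier (char (log_gamma_distribution \<nu>)) v" for v
    by (simp add: inverse_fourier_def mult.left_commute flip: integral_mult_right_zero)
  then have "rho_uexp \<nu> 0 x = Gamma (\<nu> + 1) * (gamma_density \<nu> x * x) / x"
    using assms
    by (simp add: rho_uexp_eq_inverse_mellin inverse_mellin_eq_inverse_fourier
        Re_inverse_fourier_char_log_gamma_distribution Re_divide_of_real)
  also have "\<dots> = x powr \<nu> / exp x"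
    using Gamma_pos assms(2) by (simp add: gamma_density_def)
  finally show ?thesis .
qed

section \<open>Mellin transform of the weights\<close>

lemma rho_uexp_Suc:
  assumes "\<nu> \<ge> 0" "x > 0"
  shows "integrable lborel (\<lambda>t. indicator {0<..} t * rho_uexp \<nu> k (x / t) * exp (- t) / t)"
    and "rho_uexp \<nu> (Suc k) x = (LINT t|lborel. indicator {0<..} t * rho_uexp \<nu> k (x / t) * exp (- t) / t)"
proof -
  note mellin = inverse_mellin_mult_Gamma[OF integrable_uexp_kernel[OF assms(1)] assms(2), of k]
  have Re_integrand: "(\<lambda>t. Re (indicator {0<..} t *\<^sub>R
          (inverse_mellin (uexp_kernel \<nu> k) (x / t) * complex_of_real (exp (- t) / t))))
      = (\<lambda>t. indicator {0<..} t * rho_uexp \<nu> k (x / t) * exp (- t) / t)"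
    using assms by (auto simp: fun_eq_iff indicator_def rho_uexp_eq_inverse_mellin)
  show "integrable lborel (\<lambda>t. indicator {0<..} t * rho_uexp \<nu> k (x / t) * exp (- t) / t)"
    using integrable_Re[OF mellin(1)] unfolding Re_integrand .
  have "rho_uexp \<nu> (Suc k) x
      = Re (inverse_mellin (\<lambda>y. uexp_kernel \<nu> k y * Gamma (1 + \<i> * complex_of_real y)) x)"
    using assms by (simp add: rho_uexp_eq_inverse_mellin uexp_kernel_Suc)
  also have "\<dots> = (LINT t|lborel. indicator {0<..} t * rho_uexp \<nu> k (x / t) * exp (- t) / t)"
    unfolding mellin(2) integral_Re[OF mellin(1), symmetric] Re_integrand ..
  finally show "rho_uexp \<nu> (Suc k) x
      = (LINT t|lborel. indicator {0<..} t * rho_uexp \<nu> k (x / t) * exp (- t) / t)" .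
qed

lemma rho_uexp_nonneg:
  assumes "\<nu> \<ge> 0" "x > 0"
  shows "rho_uexp \<nu> k x \<ge> 0"
  using assms(2)
proof (induction k arbitrary: x)
  case 0
  then show ?case
    using assms(1) by (simp add: rho_uexp_0)
next
  case (Suc k)
  show ?case
    unfolding rho_uexp_Suc(2)[OF assms(1) Suc.prems]
    by (intro integral_nonneg_AE AE_I2) (use Suc in \<open>auto simp: indicator_def\<close>)
qed

text \<open>The factor \<open>indicator {0<..} (x / t)\<close> is redundant, but only
  \<open>\<lambda>x. indicator {0<..} x * rho_uexp \<nu> k x\<close> is known to be measurable.\<close>

lemma nn_integral_powr_rho_uexp_Suc:
  assumes "\<nu> \<ge> 0"
  shows "(\<integral>\<^sup>+ x. ennreal (indicator {0<..} x * x powr (s - 1) * rho_uexp \<nu> (Suc k) x) \<partial>lborel)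
       = (\<integral>\<^sup>+ x. \<integral>\<^sup>+ t. ennreal (indicator {0<..} x * indicator {0<..} t * x powr (s - 1)
            * (indicator {0<..} (x / t) * rho_uexp \<nu> k (x / t)) * exp (- t) / t) \<partial>lborel \<partial>lborel)"
proof (rule nn_integral_cong)
  note [measurable] = borel_measurable_rho_uexp[OF assms, of k]
  fix x :: real
  show "ennreal (indicator {0<..} x * x powr (s - 1) * rho_uexp \<nu> (Suc k) x)
      = (\<integral>\<^sup>+ t. ennreal (indicator {0<..} x * indicator {0<..} t * x powr (s - 1)
          * (indicator {0<..} (x / t) * rho_uexp \<nu> k (x / t)) * exp (- t) / t) \<partial>lborel)"
  proof (cases "x > 0")
    case True
    define q where "q t = indicator {0<..} t * (indicator {0<..} (x / t) * rho_uexp \<nu> k (x / t)) * exp (- t) / t"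
      for t
    have "q = (\<lambda>t. indicator {0<..} t * rho_uexp \<nu> k (x / t) * exp (- t) / t)"
      using True by (auto simp: fun_eq_iff q_def indicator_def)
    then have "rho_uexp \<nu> (Suc k) x = (LINT t|lborel. q t)" and "integrable lborel q"
      using rho_uexp_Suc[OF assms True, of k] by simp_all
    moreover have "AE t in lborel. 0 \<le> q t"
      using True rho_uexp_nonneg[OF assms] by (intro AE_I2) (simp add: q_def indicator_def)
    ultimately have "ennreal (rho_uexp \<nu> (Suc k) x) = (\<integral>\<^sup>+ t. ennreal (q t) \<partial>lborel)"
      by (simp add: nn_integral_eq_integral)
    then have "ennreal (indicator {0<..} x * x powr (s - 1) * rho_uexp \<nu> (Suc k) x)
        = ennreal (x powr (s - 1)) * (\<integral>\<^sup>+ t. ennreal (q t) \<partial>lborel)"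
      using True rho_uexp_nonneg[OF assms True] by (simp add: ennreal_mult')
    also have "\<dots> = (\<integral>\<^sup>+ t. ennreal (x powr (s - 1)) * ennreal (q t) \<partial>lborel)"
      by (rule nn_integral_cmult[symmetric]) (simp add: q_def)
    finally show ?thesis
      using True by (simp add: q_def ennreal_mult'[symmetric] mult_ac)
  qed (simp add: indicator_def)
qed

definition mellin_uexp :: "real \<Rightarrow> nat \<Rightarrow> real \<Rightarrow> real" where
  "mellin_uexp \<nu> k s = Gamma (\<nu> + s) * Gamma s ^ k"

lemma mellin_uexp_Suc: "mellin_uexp \<nu> (Suc k) s = Gamma s * mellin_uexp \<nu> k s"
  by (simp add: mellin_uexp_def mult_ac)

lemma nn_integral_rho_uexp_powr:
  assumes "\<nu> \<ge> 0" "s > 0"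
  shows "(\<integral>\<^sup>+ x. ennreal (indicator {0<..} x * x powr (s - 1) * rho_uexp \<nu> k x) \<partial>lborel)
           = ennreal (mellin_uexp \<nu> k s)"
proof (induction k)
  case 0
  have "(\<integral>\<^sup>+ x. ennreal (indicator {0<..} x * x powr (s - 1) * rho_uexp \<nu> 0 x) \<partial>lborel)
      = (\<integral>\<^sup>+ x. ennreal (indicator {0..} x * x powr (\<nu> + s - 1) / exp x) \<partial>lborel)"
    using assms(1)
    by (intro nn_integral_cong) (auto simp: indicator_def rho_uexp_0 powr_add[symmetric] algebra_simps)
  also have "\<dots> = ennreal (Gamma (\<nu> + s))"
    using assms by (simp add: Gamma_conv_nn_integral_real)
  finally show ?case
    by (simp add: mellin_uexp_def)
next
  case (Suc k)
  note [measurable] = borel_measurable_rho_uexp[OF assms(1), of k]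
  have "(\<integral>\<^sup>+ x. ennreal (indicator {0<..} x * x powr (s - 1) * rho_uexp \<nu> (Suc k) x) \<partial>lborel)
      = (\<integral>\<^sup>+ x. \<integral>\<^sup>+ t. ennreal (indicator {0<..} x * indicator {0<..} t * x powr (s - 1)
            * (indicator {0<..} (x / t) * rho_uexp \<nu> k (x / t)) * exp (- t) / t) \<partial>lborel \<partial>lborel)"
    by (rule nn_integral_powr_rho_uexp_Suc[OF assms(1)])
  also have "\<dots> = ennreal (mellin_uexp \<nu> k s) * ennreal (Gamma s)"
  proof -
    have "(\<integral>\<^sup>+ t. ennreal (indicator {0<..} t * t powr (s - 1) * exp (- t)) \<partial>lborel) = ennreal (Gamma s)"
      using Gamma_conv_nn_integral_real[OF assms(2)]
      by (auto intro!: nn_integral_cong simp: indicator_def exp_minus field_simps)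
    moreover have "(\<integral>\<^sup>+ u. ennreal (indicator {0<..} u * u powr (s - 1) * (indicator {0<..} u * rho_uexp \<nu> k u))
                     \<partial>lborel)
        = ennreal (mellin_uexp \<nu> k s)"
      unfolding Suc.IH[symmetric] by (intro nn_integral_cong) (simp add: indicator_def)
    moreover have "0 \<le> indicator {0<..} u * rho_uexp \<nu> k u" for u
      using rho_uexp_nonneg[OF assms(1)] by (simp add: indicator_def)
    ultimately show ?thesis
      by (subst nn_integral_mellin_convolution) auto
  qed
  also have "\<dots> = ennreal (mellin_uexp \<nu> (Suc k) s)"
    using Gamma_real_pos[OF assms(2)] by (simp add: mellin_uexp_def ennreal_mult'[symmetric] mult_ac)
  finally show ?case .
qed

lemma has_integral_rho_uexp_powr:
  assumes "\<nu> \<ge> 0" "s > 0"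
  shows "((\<lambda>x. rho_uexp \<nu> k x * x powr (s - 1)) has_integral mellin_uexp \<nu> k s) {0<..}"
proof -
  have "((\<lambda>x. indicator {0<..} x * x powr (s - 1) * rho_uexp \<nu> k x) has_integral mellin_uexp \<nu> k s) UNIV"
    (is "(?f has_integral _) UNIV")
  proof (rule nn_integral_has_integral)
    have "(\<lambda>x. x powr (s - 1) * (indicator {0<..} x * rho_uexp \<nu> k x)) \<in> borel_measurable borel"
      using borel_measurable_rho_uexp[OF assms(1), of k] by measurable
    then show "(\<lambda>x. indicator {0<..} x * x powr (s - 1) * rho_uexp \<nu> k x) \<in> borel_measurable borel"
      by (simp add: mult_ac)
    show "0 \<le> indicator {0<..} x * x powr (s - 1) * rho_uexp \<nu> k x" for x
      using rho_uexp_nonneg[OF assms(1)] by (simp add: indicator_def)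
    show "mellin_uexp \<nu> k s \<ge> 0"
      using assms by (simp add: mellin_uexp_def Gamma_real_pos less_imp_le)
  qed (rule nn_integral_rho_uexp_powr[OF assms])
  moreover have "?f = (\<lambda>x. if x \<in> {0<..} then rho_uexp \<nu> k x * x powr (s - 1) else 0)"
    by (auto simp: fun_eq_iff)
  ultimately show ?thesis
    by (simp only: has_integral_restrict_UNIV)
qed

section \<open>The operator theta on powers\<close>

lemma theta_op_powr_sum:
  assumes f: "\<And>t. t > 0 \<Longrightarrow> f t = (\<Sum>l\<le>N. c l * t powr (\<beta> + real l))" and t: "t > 0"
  shows "theta_op f t = (\<Sum>l\<le>N. c l * (\<beta> + real l + 1) * t powr (\<beta> + 1 + real l))"
proof -
  define g where "g s = (\<Sum>l\<le>N. c l * s powr (\<beta> + real l + 1))" for s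
  have "\<forall>\<^sub>F s in nhds t. s \<in> {0<..}"
    using t by (intro eventually_nhds_in_open) auto
  then have "\<forall>\<^sub>F s in nhds t. s * f s = g s"
    by eventually_elim (simp add: f g_def sum_distrib_left powr_add mult_ac)
  then have "deriv (\<lambda>s. s * f s) t = deriv g t"
    by (rule deriv_cong_ev) simp
  also have "\<dots> = (\<Sum>l\<le>N. c l * ((\<beta> + real l + 1) * t powr (\<beta> + real l + 1 - 1)))"
    unfolding g_def by (intro DERIV_imp_deriv DERIV_sum DERIV_cmult has_real_derivative_powr t)
  finally show ?thesis
    using t by (simp add: theta_op_def sum_distrib_left powr_add mult_ac)
qed

lemma funpow_theta_op_powr_sum:
  assumes f: "\<And>t. t > 0 \<Longrightarrow> f t = (\<Sum>l\<le>N. c l * t powr (\<beta> + real l))" and "t > 0"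
  shows "(theta_op ^^ j) f t = (\<Sum>l\<le>N. c l * pochhammer (\<beta> + real l + 1) j * t powr (\<beta> + real j + real l))"
  using \<open>t > 0\<close>
proof (induction j arbitrary: t)
  case 0
  then show ?case
    using f by simp
next
  case (Suc j)
  have "(theta_op ^^ Suc j) f t
      = (\<Sum>l\<le>N. c l * pochhammer (\<beta> + real l + 1) j * ((\<beta> + real j) + real l + 1)
                    * t powr ((\<beta> + real j) + 1 + real l))"
    unfolding funpow.simps comp_def by (rule theta_op_powr_sum[OF _ Suc.prems]) (use Suc.IH in auto)
  also have "\<dots> = (\<Sum>l\<le>N. c l * pochhammer (\<beta> + real l + 1) (Suc j) * t powr (\<beta> + real (Suc j) + real l))"
    by (intro sum.cong refl) (simp add: pochhammer_Suc algebra_simps)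
  finally show ?case .
qed

lemma poly_theta_powr:
  assumes "t > 0"
  shows "poly_theta P (\<lambda>s. s powr \<alpha>) t = (\<Sum>l\<le>degree P. coeff P l * pochhammer (\<alpha> + 1) l * t powr (\<alpha> + real l))"
  using funpow_theta_op_powr_sum[where f = "\<lambda>s. s powr \<alpha>" and N = 0 and c = "\<lambda>_. 1" and \<beta> = \<alpha>, OF _ assms]
  by (simp add: poly_theta_def mult.assoc)

lemma poly_theta_poly_theta_powr:
  assumes "t > 0"
  shows "poly_theta P (poly_theta R (\<lambda>s. s powr \<alpha>)) t
           = (\<Sum>j\<le>degree P. \<Sum>l\<le>degree R.
                coeff P j * coeff R l * pochhammer (\<alpha> + 1) (l + j) * t powr (\<alpha> + real j + real l))"
proof -
  have "poly_theta P (poly_theta R (\<lambda>s. s powr \<alpha>)) t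
      = (\<Sum>j\<le>degree P. coeff P j * (\<Sum>l\<le>degree R.
           (coeff R l * pochhammer (\<alpha> + 1) l) * pochhammer (\<alpha> + real l + 1) j * t powr (\<alpha> + real j + real l)))"
    unfolding poly_theta_def[of P] using funpow_theta_op_powr_sum[OF poly_theta_powr assms] by simp
  also have "\<dots> = (\<Sum>j\<le>degree P. \<Sum>l\<le>degree R.
                coeff P j * coeff R l * pochhammer (\<alpha> + 1) (l + j) * t powr (\<alpha> + real j + real l))"
    unfolding sum_distrib_left
  proof (intro sum.cong refl)
    fix j l
    have "pochhammer (\<alpha> + 1) (l + j) = pochhammer (\<alpha> + 1) l * pochhammer (\<alpha> + real l + 1) j"
      unfolding pochhammer_product' by (simp add: add_ac)
    then show "coeff P j
          * (coeff R l * pochhammer (\<alpha> + 1) l * pochhammer (\<alpha> + real l + 1) j * t powr (\<alpha> + real j + real l))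
        = coeff P j * coeff R l * pochhammer (\<alpha> + 1) (l + j) * t powr (\<alpha> + real j + real l)"
      by (simp add: mult_ac)
  qed
  finally show ?thesis .
qed

section \<open>Composition orthogonality\<close>

lemma has_integral_poly_mult_rho_uexp:
  assumes "\<nu> \<ge> 0" "\<alpha> > -1"
  shows "((\<lambda>x. poly P x * poly R x * rho_uexp \<nu> k x * x powr \<alpha>) has_integral
           (\<Sum>j\<le>degree P. \<Sum>l\<le>degree R. coeff P j * coeff R l * mellin_uexp \<nu> k (\<alpha> + 1 + real j + real l))) {0<..}"
proof -
  have "((\<lambda>x. \<Sum>j\<le>degree P. \<Sum>l\<le>degree R.
            coeff P j * coeff R l * (rho_uexp \<nu> k x * x powr (\<alpha> + 1 + real j + real l - 1)))
      has_integral (\<Sum>j\<le>degree P. \<Sum>l\<le>degree R.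
                      coeff P j * coeff R l * mellin_uexp \<nu> k (\<alpha> + 1 + real j + real l))) {0<..}"
    using assms by (intro has_integral_sum has_integral_mult_right has_integral_rho_uexp_powr) auto
  then show ?thesis
  proof (rule has_integral_eq[rotated])
    fix x :: real
    assume "x \<in> {0<..}"
    then have powr_eq: "x powr (\<alpha> + 1 + real j + real l - 1) = x ^ j * x ^ l * x powr \<alpha>" for j l
      by (simp add: powr_add powr_realpow[symmetric] mult_ac)
    have "poly P x * poly R x = (\<Sum>j\<le>degree P. \<Sum>l\<le>degree R. (coeff P j * x ^ j) * (coeff R l * x ^ l))"
      unfolding poly_altdef by (rule sum_product)
    then have "poly P x * poly R x * rho_uexp \<nu> k x * x powr \<alpha>
        = (\<Sum>j\<le>degree P. \<Sum>l\<le>degree R. (coeff P j * x ^ j) * (coeff R l * x ^ l) * (rho_uexp \<nu> k x * x powr \<alpha>))"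
      by (simp only: sum_distrib_right mult.assoc)
    then show "(\<Sum>j\<le>degree P. \<Sum>l\<le>degree R.
            coeff P j * coeff R l * (rho_uexp \<nu> k x * x powr (\<alpha> + 1 + real j + real l - 1)))
        = poly P x * poly R x * rho_uexp \<nu> k x * x powr \<alpha>"
      unfolding powr_eq by (simp add: mult_ac)
  qed
qed

lemma has_integral_rho_uexp_poly_theta:
  assumes "\<nu> \<ge> 0" "\<alpha> > -1"
  shows "((\<lambda>t. rho_uexp \<nu> k t * poly_theta P (poly_theta R (\<lambda>s. s powr \<alpha>)) t) has_integral
           (\<Sum>j\<le>degree P. \<Sum>l\<le>degree R.
              coeff P j * coeff R l * pochhammer (\<alpha> + 1) (l + j)
                * mellin_uexp \<nu> k (\<alpha> + 1 + real j + real l))) {0<..}"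
proof -
  have "((\<lambda>t. \<Sum>j\<le>degree P. \<Sum>l\<le>degree R. coeff P j * coeff R l * pochhammer (\<alpha> + 1) (l + j)
            * (rho_uexp \<nu> k t * t powr (\<alpha> + 1 + real j + real l - 1)))
      has_integral (\<Sum>j\<le>degree P. \<Sum>l\<le>degree R.
              coeff P j * coeff R l * pochhammer (\<alpha> + 1) (l + j)
                * mellin_uexp \<nu> k (\<alpha> + 1 + real j + real l))) {0<..}"
    using assms by (intro has_integral_sum has_integral_mult_right has_integral_rho_uexp_powr) auto
  then show ?thesis
    by (rule has_integral_eq[rotated]) (simp add: poly_theta_poly_theta_powr sum_distrib_left add_ac mult_ac)
qed

lemma integral_poly_mult_rho_uexp_Suc:
  assumes "\<nu> \<ge> 0" "\<alpha> > -1"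
  shows "integral {0<..} (\<lambda>x. poly P x * poly R x * rho_uexp \<nu> (Suc k) x * x powr \<alpha>)
           = Gamma (1 + \<alpha>) * integral {0<..} (\<lambda>t. rho_uexp \<nu> k t * poly_theta P (poly_theta R (\<lambda>s. s powr \<alpha>)) t)"
proof -
  have "\<alpha> + 1 \<notin> \<int>\<^sub>\<le>\<^sub>0"
    using assms(2) by (auto elim!: nonpos_Ints_cases)
  moreover have "Gamma (\<alpha> + 1) > 0"
    using assms(2) by (intro Gamma_real_pos) simp
  ultimately have "Gamma (\<alpha> + 1 + real j + real l) = Gamma (1 + \<alpha>) * pochhammer (\<alpha> + 1) (l + j)" for j l
    using pochhammer_Gamma[of "\<alpha> + 1" "l + j"] by (simp add: add_ac)
  then show ?thesis
    using has_integral_poly_mult_rho_uexp[OF assms, of P R "Suc k"]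
      has_integral_rho_uexp_poly_theta[OF assms, of k P R]
    by (simp add: integral_unique mellin_uexp_Suc sum_distrib_left mult_ac)
qed

theorem theorem4:
  fixes k :: nat and \<nu> \<alpha> :: real and Q :: "nat \<Rightarrow> real poly"
  assumes "k \<ge> 1" and "\<nu> \<ge> 0" and "\<alpha> > -1"
  shows "(\<forall>m n. integral {0<..} (\<lambda>x. poly (Q n) x * poly (Q m) x * rho_uexp \<nu> k x * x powr \<alpha>)
                 = (if m = n then 1 else 0))
     \<longleftrightarrow> (\<forall>m n. integral {0<..} (\<lambda>t. rho_uexp \<nu> (k - 1) t
                    * poly_theta (Q n) (poly_theta (Q m) (\<lambda>s. s powr \<alpha>)) t)
                 = (if m = n then 1 / Gamma (1 + \<alpha>) else 0))"
proof -
  obtain j where k: "k = Suc j"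
    using assms(1) by (cases k) auto
  have "Gamma (1 + \<alpha>) > 0"
    using assms(3) by (intro Gamma_real_pos) simp
  then have "Gamma (1 + \<alpha>) * I = (if m = n then 1 else 0) \<longleftrightarrow> I = (if m = n then 1 / Gamma (1 + \<alpha>) else 0)"
    for I :: real and m n :: nat
    by (auto simp: field_simps)
  then show ?thesis
    by (simp add: k integral_poly_mult_rho_uexp_Suc[OF assms(2,3)])
qed

end
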